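(* Let $p\in[2,+\infty]$ and let $U\in C^3([0,1])$ satisfy $U(1)=0$, $\max_{[0,1]}U''<0$, $U'(0)=0$, $U'(1)=-1$. There exist $\mu_0>0$ and $C>0$ such that for all $\lambda=\mu+i\nu$ with $\nu>U(0)$ and $|\mu|<\mu_0$, all $\alpha\ge0$, and all $(\phi,v)\in D(\mathcal A_{\lambda,\alpha})\times L^\infty(0,1)$ with $\mathcal A_{\lambda,\alpha}\phi=v$, $$\|\phi\|_{1,2}\le\frac{C}{\big[|\mu|+|\nu-U(0)|\big]^{\frac{1}{2p}+\frac14}}\|v\|_p .$$
   Context: $\mathcal A_{\lambda,\alpha}=(U+i\lambda)\big(-\frac{d^2}{dx^2}+\alpha^2\big)+U''$ on $(0,1)$, $D(\mathcal A_{\lambda,\alpha})=\{\phi\in H^2(0,1):\phi'(0)=0,\ \phi(1)=0\}$. $\|\cdot\|_p$ and $\|\cdot\|_{1,2}$ are the norms of $L^p(0,1)$ and $H^1(0,1)$. *)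

theory Defs
  imports "HOL-Analysis.Analysis" "HOL-Probability.Essential_Supremum"
begin

definition C3_on_01 :: "(real \<Rightarrow> real) \<Rightarrow> (real \<Rightarrow> real) \<Rightarrow> (real \<Rightarrow> real) \<Rightarrow> (real \<Rightarrow> real) \<Rightarrow> bool" where
  "C3_on_01 U U1 U2 U3 \<longleftrightarrow>
     (\<forall>x\<in>{0..1}. (U has_real_derivative U1 x) (at x within {0..1})
               \<and> (U1 has_real_derivative U2 x) (at x within {0..1})
               \<and> (U2 has_real_derivative U3 x) (at x within {0..1}))
     \<and> continuous_on {0..1} U3"

text \<open>phi is (the continuous representative of) an element of H^2(0,1) with weak derivatives
phi1 (continuous) and phi2 in L^2(0,1).\<close>
definition H2_01 :: "(real \<Rightarrow> complex) \<Rightarrow> (real \<Rightarrow> complex) \<Rightarrow> (real \<Rightarrow> complex) \<Rightarrow> bool" where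
  "H2_01 phi phi1 phi2 \<longleftrightarrow>
     phi2 absolutely_integrable_on {0..1}
     \<and> (\<lambda>x. (cmod (phi2 x))\<^sup>2) integrable_on {0..1}
     \<and> (\<forall>x\<in>{0..1}. phi1 x = phi1 0 + integral {0..x} phi2)
     \<and> (\<forall>x\<in>{0..1}. phi x = phi 0 + integral {0..x} phi1)"

definition dom_A :: "(real \<Rightarrow> complex) \<Rightarrow> (real \<Rightarrow> complex) \<Rightarrow> (real \<Rightarrow> complex) \<Rightarrow> bool" where
  "dom_A phi phi1 phi2 \<longleftrightarrow> H2_01 phi phi1 phi2 \<and> phi1 0 = 0 \<and> phi 1 = 0"

definition Linf_01 :: "(real \<Rightarrow> complex) \<Rightarrow> bool" where
  "Linf_01 v \<longleftrightarrow> v \<in> borel_measurable (lebesgue_on {0..1})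
     \<and> (\<exists>B. AE x in lebesgue_on {0..1}. cmod (v x) \<le> B)"

definition Lp_norm :: "ereal \<Rightarrow> (real \<Rightarrow> complex) \<Rightarrow> real" where
  "Lp_norm p f = (if p = \<infinity>
      then real_of_ereal (esssup (lebesgue_on {0..1}) (\<lambda>x. ereal (cmod (f x))))
      else (integral {0..1} (\<lambda>x. cmod (f x) powr real_of_ereal p)) powr (1 / real_of_ereal p))"

definition H1_norm :: "(real \<Rightarrow> complex) \<Rightarrow> (real \<Rightarrow> complex) \<Rightarrow> real" where
  "H1_norm phi phi1 = sqrt (integral {0..1} (\<lambda>x. (cmod (phi x))\<^sup>2 + (cmod (phi1 x))\<^sup>2))"

definition A_eq :: "(real \<Rightarrow> real) \<Rightarrow> (real \<Rightarrow> real) \<Rightarrow> complex \<Rightarrow> real \<Rightarrow>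
    (real \<Rightarrow> complex) \<Rightarrow> (real \<Rightarrow> complex) \<Rightarrow> (real \<Rightarrow> complex) \<Rightarrow> bool" where
  "A_eq U U2 lam alpha phi phi2 v \<longleftrightarrow>
     (AE x in lebesgue_on {0..1}.
        (complex_of_real (U x) + \<i> * lam) * (- phi2 x + complex_of_real (alpha\<^sup>2) * phi x)
        + complex_of_real (U2 x) * phi x = v x)"

end

theory Submission
  imports Defs
begin

text \<open>Multiply \<open>A \<phi> = v\<close> by \<open>(1 - i sgn \<mu>) conj \<phi> / (U + i \<lambda>)\<close> and integrate. Because
  \<open>\<phi>'(0) = \<phi>(1) = 0\<close>, the term \<open>-\<integral> \<phi>'' conj \<phi>\<close> becomes \<open>\<integral> |\<phi>'|^2\<close>, while the rotation
  \<open>1 - i sgn \<mu>\<close> makes the real part of the coefficient of \<open>U'' |\<phi>|^2\<close> at least \<open>m / |U + i \<lambda>|\<close>,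
  where \<open>U'' \<le> -m\<close>. Absorbing the right-hand side by AM-GM gives
  \<open>m \<integral> |\<phi>'|^2 \<le> \<integral> |v|^2 / |U + i \<lambda>|\<close>. Since \<open>U\<close> decreases quadratically from its maximum
  \<open>U(0)\<close>, \<open>|U + i \<lambda>| \<ge> (\<delta> + m x^2 / 2) / 2\<close> with \<open>\<delta> = |\<mu>| + |\<nu> - U(0)|\<close>, and Hoelder's inequality
  with exponents \<open>p/2\<close> and its conjugate bounds the weighted integral by
  \<open>C \<delta>^(-1/2 - 1/p) \<parallel>v\<parallel>\<^sub>p^2\<close>. Finally \<open>\<phi>(1) = 0\<close> gives \<open>\<integral> |\<phi>|^2 \<le> \<integral> |\<phi>'|^2\<close>.\<close>

section \<open>Integration on an interval\<close>

lemma integrable_triangle_product: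
  fixes g h :: "real \<Rightarrow> complex"
  assumes [measurable]: "g \<in> borel_measurable borel" "h \<in> borel_measurable borel"
    and g: "set_integrable lborel {a..b} g" and h: "\<And>t. norm (h t) \<le> B"
  shows "integrable (lborel \<Otimes>\<^sub>M lborel)
           (\<lambda>(x, t). if a \<le> x \<and> x \<le> t \<and> t \<le> b then g x * h t else 0)"
proof (rule Bochner_Integration.integrable_bound)
  define D where "D = (\<lambda>(x::real, t::real). indicator {a..b} x * norm (g x) * (B * indicator {a..b} t))"
  have B: "0 \<le> B" using h[of 0] norm_ge_zero order_trans by blast
  have gn: "integrable lborel (\<lambda>x. indicator {a..b} x * norm (g x))"
    using integrable_norm[OF g[unfolded set_integrable_def]] by (simp add: abs_mult)
  show "integrable (lborel \<Otimes>\<^sub>M lborel) D"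
  proof (rule lborel_pair.Fubini_integrable)
    show "D \<in> borel_measurable (lborel \<Otimes>\<^sub>M lborel)" unfolding D_def by measurable
    have "(\<lambda>t. norm (D (x, t))) = (\<lambda>t. (indicator {a..b} x * norm (g x) * B) * indicator {a..b} t)" for x
      unfolding D_def using B by (auto simp: abs_mult indicator_def)
    then have "(\<integral>t. norm (D (x, t)) \<partial>lborel) = indicator {a..b} x * norm (g x) * B * measure lborel {a..b}" for x
      by simp
    then show "integrable lborel (\<lambda>x. \<integral>t. norm (D (x, t)) \<partial>lborel)"
      using gn by simp
    show "AE x in lborel. integrable lborel (\<lambda>t. D (x, t))"
      unfolding D_def by (auto simp: emeasure_lborel_Icc_eq)
  qed
  show "(\<lambda>(x, t). if a \<le> x \<and> x \<le> t \<and> t \<le> b then g x * h t else 0) \<in> borel_measurable (lborel \<Otimes>\<^sub>M lborel)"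
    by measurable
  show "AE z in lborel \<Otimes>\<^sub>M lborel.
          norm ((\<lambda>(x, t). if a \<le> x \<and> x \<le> t \<and> t \<le> b then g x * h t else 0) z) \<le> norm (D z)"
    unfolding D_def using h B
    by (intro AE_I2) (auto simp: indicator_def norm_mult abs_mult mult.commute[of B] intro!: mult_left_mono)
qed

lemma integral_mult_tail_integral_swap_borel:
  fixes g h :: "real \<Rightarrow> complex"
  assumes [measurable]: "g \<in> borel_measurable borel" "h \<in> borel_measurable borel"
    and g: "set_integrable lborel {a..b} g" and h: "\<And>t. norm (h t) \<le> B"
  shows "integral {a..b} (\<lambda>x. g x * integral {x..b} h) = integral {a..b} (\<lambda>t. h t * integral {a..t} g)"
proof -
  define F where "F x t = (if a \<le> x \<and> x \<le> t \<and> t \<le> b then g x * h t else 0)" for x t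
  have F: "integrable (lborel \<Otimes>\<^sub>M lborel) (case_prod F)"
    unfolding F_def by (rule integrable_triangle_product[OF _ _ g h]) simp_all
  have hi: "set_integrable lborel {x..b} h" for x
    unfolding set_integrable_def
    by (rule integrableI_bounded_set_indicator[where B=B]) (use h in \<open>auto simp: emeasure_lborel_Icc_eq\<close>)
  have gi: "set_integrable lborel {a..t} g" if "t \<le> b" for t
    by (rule set_integrable_subset[OF g]) (use that in auto)
  have inner_t: "(\<integral>t. F x t \<partial>lborel) = indicator {a..b} x *\<^sub>R (g x * integral {x..b} h)" for x
  proof -
    have "(\<lambda>t. F x t) = (\<lambda>t. indicator {a..b} x *\<^sub>R (g x * (indicator {x..b} t *\<^sub>R h t)))"
      unfolding F_def by (auto simp: indicator_def fun_eq_iff)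
    then have "(\<integral>t. F x t \<partial>lborel) = indicator {a..b} x *\<^sub>R (g x * (LINT t:{x..b}|lborel. h t))"
      unfolding set_lebesgue_integral_def by (simp only: integral_scaleR_right integral_mult_right_zero)
    then show ?thesis using set_borel_integral_eq_integral(2)[OF hi[of x]] by simp
  qed
  have inner_x: "(\<integral>x. F x t \<partial>lborel) = indicator {a..b} t *\<^sub>R (h t * integral {a..t} g)" for t
  proof (cases "t \<le> b")
    case True
    have "(\<lambda>x. F x t) = (\<lambda>x. indicator {a..b} t *\<^sub>R (h t * (indicator {a..t} x *\<^sub>R g x)))"
      using True unfolding F_def by (auto simp: indicator_def fun_eq_iff)
    then have "(\<integral>x. F x t \<partial>lborel) = indicator {a..b} t *\<^sub>R (h t * (LINT x:{a..t}|lborel. g x))"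
      unfolding set_lebesgue_integral_def by (simp only: integral_scaleR_right integral_mult_right_zero)
    then show ?thesis using set_borel_integral_eq_integral(2)[OF gi[OF True]] by simp
  qed (simp add: F_def)
  have I1: "set_integrable lborel {a..b} (\<lambda>x. g x * integral {x..b} h)"
    using lborel_pair.integrable_fst'[OF F] unfolding set_integrable_def by (simp add: inner_t)
  have I2: "set_integrable lborel {a..b} (\<lambda>t. h t * integral {a..t} g)"
    using lborel_pair.integrable_fst'[OF lborel_pair.integrable_product_swap[OF F]]
    unfolding set_integrable_def by (simp add: inner_x)
  have "(\<integral>t. (\<integral>x. F x t \<partial>lborel) \<partial>lborel) = (\<integral>x. (\<integral>t. F x t \<partial>lborel) \<partial>lborel)"
    by (rule lborel_pair.Fubini_integral[OF F])
  then have "(LINT t:{a..b}|lborel. h t * integral {a..t} g) = (LINT x:{a..b}|lborel. g x * integral {x..b} h)"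
    by (simp add: inner_t inner_x set_lebesgue_integral_def)
  then show ?thesis
    using set_borel_integral_eq_integral(2)[OF I1] set_borel_integral_eq_integral(2)[OF I2] by simp
qed

lemma absolutely_integrable_on_borel_representative:
  fixes f :: "real \<Rightarrow> complex"
  assumes f: "f absolutely_integrable_on {a..b}"
  obtains g N where "g \<in> borel_measurable borel" "set_integrable lborel {a..b} g" "negligible N"
    "\<And>x. x \<in> {a..b} \<Longrightarrow> x \<notin> N \<Longrightarrow> f x = g x"
proof -
  define F0 where "F0 x = indicator {a..b} x *\<^sub>R f x" for x
  have F0i: "integrable lebesgue F0" using f unfolding set_integrable_def F0_def .
  then have F0m: "F0 \<in> borel_measurable lebesgue" by auto
  obtain gr where gr: "gr \<in> borel_measurable lborel" "AE x in lborel. Re (F0 x) = gr x"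
    using completion_ex_borel_measurable_real[of "\<lambda>x. Re (F0 x)" lborel] F0m by auto
  obtain gi where gi: "gi \<in> borel_measurable lborel" "AE x in lborel. Im (F0 x) = gi x"
    using completion_ex_borel_measurable_real[of "\<lambda>x. Im (F0 x)" lborel] F0m by auto
  define g0 where "g0 x = complex_of_real (gr x) + \<i> * complex_of_real (gi x)" for x
  have ae: "AE x in lborel. F0 x = g0 x"
    using gr(2) gi(2) by eventually_elim (simp add: g0_def complex_eq_iff)
  define g where "g x = indicator {a..b} x *\<^sub>R g0 x" for x
  have gm: "g \<in> borel_measurable borel" unfolding g_def g0_def using gr(1) gi(1) by simp
  have aeg: "AE x in lborel. F0 x = g x"
    using ae by eventually_elim (auto simp: g_def F0_def indicator_def)
  obtain N where N: "{x \<in> space lborel. F0 x \<noteq> g x} \<subseteq> N" "N \<in> null_sets lborel"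
    using aeg by (auto simp: eventually_ae_filter)
  have "negligible N"
    using N(2) negligible_iff_null_sets null_sets_completionI by blast
  moreover have "f x = g x" if "x \<in> {a..b}" "x \<notin> N" for x
  proof -
    have "F0 x = g x" using N(1) that(2) by auto
    then show ?thesis using that(1) unfolding F0_def by simp
  qed
  moreover have "set_integrable lborel {a..b} g"
  proof -
    have "g \<in> borel_measurable lebesgue" using gm by (intro measurable_completion) simp
    with F0i have "integrable lebesgue g"
      by (rule integrable_cong_AE_imp) (use aeg AE_completion in auto)
    then have "integrable lborel g"
      using integrable_completion[of g lborel] gm by simp
    moreover have "(\<lambda>x. indicator {a..b} x *\<^sub>R g x) = g"
      unfolding g_def by (auto simp: indicator_def fun_eq_iff)
    ultimately show ?thesis unfolding set_integrable_def by simp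
  qed
  ultimately show ?thesis using that gm by blast
qed

lemma integral_mult_tail_integral_swap:
  fixes f h :: "real \<Rightarrow> complex"
  assumes f: "f absolutely_integrable_on {a..b}" and h: "continuous_on {a..b} h"
  shows "integral {a..b} (\<lambda>x. f x * integral {x..b} h) = integral {a..b} (\<lambda>t. h t * integral {a..t} f)"
proof (cases "a \<le> b")
  case ab: True
  obtain g N where gm: "g \<in> borel_measurable borel" and gint: "set_integrable lborel {a..b} g"
    and N: "negligible N" and fg: "\<And>x. x \<in> {a..b} \<Longrightarrow> x \<notin> N \<Longrightarrow> f x = g x"
    using absolutely_integrable_on_borel_representative[OF f] by blast
  define h' where "h' t = h (max a (min b t))" for t
  have h'c: "continuous_on UNIV h'" unfolding h'_def
    by (rule continuous_on_compose2[OF h]) (use ab in \<open>auto intro!: continuous_intros\<close>)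
  have hh': "h t = h' t" if "t \<in> {a..b}" for t using that unfolding h'_def by auto
  obtain B where B: "\<And>t. t \<in> {a..b} \<Longrightarrow> norm (h t) \<le> B"
    using compact_imp_bounded[OF compact_continuous_image[OF h compact_Icc]] unfolding bounded_iff by force
  have h'B: "norm (h' t) \<le> B" for t unfolding h'_def by (rule B) (use ab in auto)
  have "integral {a..b} (\<lambda>x. f x * integral {x..b} h) = integral {a..b} (\<lambda>x. g x * integral {x..b} h')"
    by (rule integral_spike[OF N]) (auto simp: fg hh' intro!: integral_cong)
  also have "\<dots> = integral {a..b} (\<lambda>t. h' t * integral {a..t} g)"
    by (rule integral_mult_tail_integral_swap_borel[OF gm _ gint h'B])
       (simp add: h'c borel_measurable_continuous_onI)
  also have "\<dots> = integral {a..b} (\<lambda>t. h t * integral {a..t} f)"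
  proof (rule integral_cong)
    fix t :: real assume t: "t \<in> {a..b}"
    have "integral {a..t} f = integral {a..t} g"
      by (rule integral_spike[OF N]) (use t fg in auto)
    then show "h' t * integral {a..t} g = h t * integral {a..t} f" using hh'[OF t] by simp
  qed
  finally show ?thesis .
qed simp

lemma AE_lebesgue_on_negligibleE:
  assumes "AE x in lebesgue_on S. P x" and "S \<in> sets lebesgue"
  obtains N where "negligible N" "\<And>x. x \<in> S \<Longrightarrow> x \<notin> N \<Longrightarrow> P x"
proof -
  obtain N where N: "{x \<in> S. \<not> P x} \<subseteq> N" "N \<in> null_sets (lebesgue_on S)"
    using assms(1) by (auto simp: eventually_ae_filter)
  then have "negligible N"
    using null_sets_restrict_space[OF assms(2)] negligible_iff_null_sets by auto
  with N(1) that show ?thesis by blast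
qed

lemma square_integral_le_integral_square:
  fixes f :: "real \<Rightarrow> real"
  assumes "continuous_on {0..1} f"
  shows "(integral {0..1} f)\<^sup>2 \<le> integral {0..1} (\<lambda>x. (f x)\<^sup>2)"
proof -
  define L where "L = integral {0..1} f"
  have int: "g integrable_on {0..1}" if "continuous_on {0..1} g" for g :: "real \<Rightarrow> real"
    using that by (rule integrable_continuous_interval)
  have "0 \<le> integral {0..1} (\<lambda>x. (f x - L)\<^sup>2)"
    by (rule integral_nonneg) (auto intro!: int continuous_intros assms)
  also have "\<dots> = integral {0..1} (\<lambda>x. (f x)\<^sup>2 - 2 * L * f x + L\<^sup>2)"
    by (simp add: power2_diff algebra_simps)
  also have "\<dots> = integral {0..1} (\<lambda>x. (f x)\<^sup>2) - 2 * L * L + L\<^sup>2"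
    unfolding L_def using assms
    by (subst integral_add integral_diff; auto intro!: int continuous_intros)+
  finally show ?thesis unfolding L_def by (simp add: power2_eq_square)
qed

lemma le_of_le_right_limit:
  fixes f :: "real \<Rightarrow> real"
  assumes f: "continuous (at_right x) f" and le: "\<And>y. y > x \<Longrightarrow> z \<le> f y"
  shows "z \<le> f x"
proof (rule tendsto_lowerbound[OF f[unfolded continuous_within]])
  show "\<forall>\<^sub>F y in at_right x. z \<le> f y"
    unfolding eventually_at_right_field using le by (intro exI[of _ "x + 1"]) auto
qed (rule trivial_limit_at_right_real)

lemma has_real_derivative_nonpos_imp_le:
  fixes f f' :: "real \<Rightarrow> real"
  assumes ab: "a \<le> b" and f: "\<And>t. t \<in> {a..b} \<Longrightarrow> (f has_real_derivative f' t) (at t within {a..b})"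
    and f': "\<And>t. t \<in> {a..b} \<Longrightarrow> f' t \<le> 0"
  shows "f b \<le> f a"
proof -
  obtain \<xi> where \<xi>: "\<xi> \<in> {a..b}" "f b - f a = f' \<xi> * (b - a)"
    using mvt_very_simple[OF ab, of f "\<lambda>t. (*) (f' t)"] f
    by (metis atLeastAtMost_iff has_field_derivative_imp_has_derivative)
  have "f' \<xi> * (b - a) \<le> 0" using f'[OF \<xi>(1)] ab by (simp add: mult_nonpos_nonneg)
  then show ?thesis using \<xi>(2) by simp
qed

section \<open>The domain of the operator\<close>

lemma dom_A_representation:
  assumes "dom_A phi phi1 phi2"
  shows "phi2 absolutely_integrable_on {0..1}"
    and "\<And>x. x \<in> {0..1} \<Longrightarrow> phi1 x = integral {0..x} phi2"
    and "\<And>x. x \<in> {0..1} \<Longrightarrow> phi x = - integral {x..1} phi1"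
    and "continuous_on {0..1} phi1"
    and "continuous_on {0..1} phi"
proof -
  have H: "phi2 absolutely_integrable_on {0..1}" "\<forall>x\<in>{0..1}. phi1 x = phi1 0 + integral {0..x} phi2"
    "\<forall>x\<in>{0..1}. phi x = phi 0 + integral {0..x} phi1" "phi1 0 = 0" "phi 1 = 0"
    using assms unfolding dom_A_def H2_01_def by blast+
  show "phi2 absolutely_integrable_on {0..1}" by fact
  show phi1: "phi1 x = integral {0..x} phi2" if "x \<in> {0..1}" for x
    using bspec[OF H(2) that] H(4) by simp
  have "phi2 integrable_on {0..1}" using H(1) set_lebesgue_integral_eq_integral(1) by blast
  then have "continuous_on {0..1} (\<lambda>x. integral {0..x} phi2)" by (rule indefinite_integral_continuous_1)
  then show "continuous_on {0..1} phi1" by (rule continuous_on_eq) (use phi1 in auto)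
  then have int1: "phi1 integrable_on {0..1}" by (rule integrable_continuous_interval)
  then have "continuous_on {0..1} (\<lambda>x. phi 0 + integral {0..x} phi1)"
    by (intro continuous_intros indefinite_integral_continuous_1)
  then show "continuous_on {0..1} phi" by (rule continuous_on_eq) (metis H(3))
  show "phi x = - integral {x..1} phi1" if x: "x \<in> {0..1}" for x
  proof -
    have "integral {0..x} phi1 + integral {x..1} phi1 = integral {0..1} phi1"
      using x by (intro Henstock_Kurzweil_Integration.integral_combine int1) auto
    moreover have "phi 1 = phi 0 + integral {0..1} phi1" using bspec[OF H(3), of 1] by simp
    moreover have "phi x = phi 0 + integral {0..x} phi1" using bspec[OF H(3) x] .
    ultimately have "phi x + integral {x..1} phi1 = 0"
      using H(5) by (simp add: add.assoc)
    then show ?thesis by (simp add: eq_neg_iff_add_eq_0)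
  qed
qed

lemma dom_A_integral_phi2_cnj_phi:
  assumes "dom_A phi phi1 phi2"
  shows "integral {0..1} (\<lambda>x. phi2 x * cnj (phi x)) = - of_real (integral {0..1} (\<lambda>x. (cmod (phi1 x))\<^sup>2))"
proof -
  note D = dom_A_representation[OF assms]
  have "integral {0..1} (\<lambda>x. phi2 x * cnj (phi x))
      = - integral {0..1} (\<lambda>x. phi2 x * integral {x..1} (\<lambda>t. cnj (phi1 t)))"
    by (subst integral_neg[symmetric], rule integral_cong) (simp add: D(3) flip: integral_cnj)
  also have "integral {0..1} (\<lambda>x. phi2 x * integral {x..1} (\<lambda>t. cnj (phi1 t)))
      = integral {0..1} (\<lambda>t. cnj (phi1 t) * integral {0..t} phi2)"
    by (rule integral_mult_tail_integral_swap[OF D(1)]) (intro continuous_intros D(4))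
  also have "\<dots> = integral {0..1} (\<lambda>t. of_real ((cmod (phi1 t))\<^sup>2))"
    by (rule integral_cong) (metis D(2) complex_norm_square mult.commute)
  also have "\<dots> = of_real (integral {0..1} (\<lambda>x. (cmod (phi1 x))\<^sup>2))"
    by (intro integral_unique has_integral_of_real integrable_integral integrable_continuous_interval
        continuous_intros D(4))
  finally show ?thesis .
qed

lemma dom_A_has_integral_Re_rotated:
  assumes dom: "dom_A phi phi1 phi2" and c: "Re c = 1"
  shows "((\<lambda>x. Re (c * (- phi2 x * cnj (phi x)))) has_integral integral {0..1} (\<lambda>x. (cmod (phi1 x))\<^sup>2)) {0..1}"
proof -
  note D = dom_A_representation[OF dom]
  have pc: "continuous_on {0..1} (\<lambda>x. cnj (phi x))" by (intro continuous_intros D(5))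
  have "(\<lambda>x. cnj (phi x) * phi2 x) absolutely_integrable_on {0..1}"
  proof (rule absolutely_integrable_bounded_measurable_product[OF bilinear_times _ _ _ D(1)])
    show "(\<lambda>x. cnj (phi x)) \<in> borel_measurable (lebesgue_on {0..1})"
      by (rule continuous_imp_measurable_on_sets_lebesgue[OF pc]) simp
    show "bounded ((\<lambda>x. cnj (phi x)) ` {0..1})"
      by (rule compact_imp_bounded[OF compact_continuous_image[OF pc compact_Icc]])
  qed simp
  then have "(\<lambda>x. cnj (phi x) * phi2 x) integrable_on {0..1}"
    by (rule set_lebesgue_integral_eq_integral(1))
  then have "(\<lambda>x. phi2 x * cnj (phi x)) integrable_on {0..1}"
    by (simp only: mult.commute)
  from integrable_integral[OF this]
  have "((\<lambda>x. - (phi2 x * cnj (phi x))) has_integral - (- of_real (integral {0..1} (\<lambda>x. (cmod (phi1 x))\<^sup>2)))) {0..1}"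
    unfolding dom_A_integral_phi2_cnj_phi[OF dom] by (rule has_integral_neg)
  then have "((\<lambda>x. - phi2 x * cnj (phi x)) has_integral of_real (integral {0..1} (\<lambda>x. (cmod (phi1 x))\<^sup>2))) {0..1}"
    by simp
  from has_integral_linear[OF this bounded_linear_compose[OF bounded_linear_Re bounded_linear_mult_right[of c]]]
  have "((\<lambda>x. Re (c * (- phi2 x * cnj (phi x)))) has_integral
      Re (c * of_real (integral {0..1} (\<lambda>x. (cmod (phi1 x))\<^sup>2)))) {0..1}"
    by (simp only: o_def)
  then show ?thesis using c by simp
qed

lemma dom_A_H1_le_derivative:
  assumes "dom_A phi phi1 phi2"
  shows "integral {0..1} (\<lambda>x. (cmod (phi x))\<^sup>2 + (cmod (phi1 x))\<^sup>2)
           \<le> 2 * integral {0..1} (\<lambda>x. (cmod (phi1 x))\<^sup>2)"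
proof -
  note D = dom_A_representation[OF assms]
  define L where "L = integral {0..1} (\<lambda>x. cmod (phi1 x))"
  have int: "g integrable_on {a..b}" if "continuous_on {0..1} g" "{a..b} \<subseteq> {0..1}" for g :: "real \<Rightarrow> 'a::banach" and a b
    using integrable_continuous_interval[OF that(1)] integrable_on_subinterval that(2) by blast
  have phi_L: "(cmod (phi x))\<^sup>2 \<le> L\<^sup>2" if x: "x \<in> {0..1}" for x
  proof -
    have "cmod (phi x) = norm (integral {x..1} phi1)" using D(3)[OF x] by simp
    also have "\<dots> \<le> integral {x..1} (\<lambda>t. cmod (phi1 t))"
      by (rule integral_norm_bound_integral) (use x D(4) in \<open>auto intro!: int continuous_intros\<close>)
    also have "\<dots> \<le> L" unfolding L_def
      by (rule integral_subset_le) (use x D(4) in \<open>auto intro!: int continuous_intros\<close>)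
    finally show ?thesis by (simp add: power_mono)
  qed
  have "L\<^sup>2 \<le> integral {0..1} (\<lambda>x. (cmod (phi1 x))\<^sup>2)"
    unfolding L_def by (rule square_integral_le_integral_square) (intro continuous_intros D(4))
  moreover have "integral {0..1} (\<lambda>x. (cmod (phi x))\<^sup>2) \<le> integral {0..1} (\<lambda>x::real. L\<^sup>2)"
    using phi_L D(5) by (intro integral_le) (auto intro!: int continuous_intros)
  moreover have "integral {0..1} (\<lambda>x. (cmod (phi x))\<^sup>2 + (cmod (phi1 x))\<^sup>2)
      = integral {0..1} (\<lambda>x. (cmod (phi x))\<^sup>2) + integral {0..1} (\<lambda>x. (cmod (phi1 x))\<^sup>2)"
    by (rule integral_add) (auto intro!: int continuous_intros D(4,5))
  ultimately show ?thesis by simp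
qed

lemma Lp_norm_infinity_bound:
  assumes "Linf_01 v"
  shows "AE x in lebesgue_on {0..1}. cmod (v x) \<le> Lp_norm \<infinity> v" and "0 \<le> Lp_norm \<infinity> v"
proof -
  obtain B where vm: "v \<in> borel_measurable (lebesgue_on {0..1})"
    and B: "AE x in lebesgue_on {0..1}. cmod (v x) \<le> B"
    using assms unfolding Linf_01_def by blast
  define E where "E = esssup (lebesgue_on {0..1}) (\<lambda>x. ereal (cmod (v x)))"
  have E: "Lp_norm \<infinity> v = real_of_ereal E" unfolding E_def Lp_norm_def by simp
  have em: "(\<lambda>x. ereal (cmod (v x))) \<in> borel_measurable (lebesgue_on {0..1})" using vm by measurable
  have "E \<le> ereal B" unfolding E_def by (rule esssup_I[OF em]) (use B in auto)
  moreover have "0 \<le> E"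
  proof -
    have "esssup (lebesgue_on {0..1::real}) (\<lambda>x. 0 :: ereal) = 0"
      by (rule esssup_const) (simp add: emeasure_restrict_space)
    moreover have "esssup (lebesgue_on {0..1}) (\<lambda>x::real. 0 :: ereal) \<le> E"
      unfolding E_def by (rule esssup_mono) auto
    ultimately show ?thesis by simp
  qed
  ultimately obtain r where r: "E = ereal r" "r \<ge> 0" by (cases E) auto
  show "0 \<le> Lp_norm \<infinity> v" using E r by simp
  show "AE x in lebesgue_on {0..1}. cmod (v x) \<le> Lp_norm \<infinity> v"
    using esssup_AE[of "\<lambda>x. ereal (cmod (v x))" "lebesgue_on {0..1}"] unfolding E_def[symmetric] E r
    by simp
qed

lemma Lp_norm_nonneg:
  assumes "Linf_01 v"
  shows "0 \<le> Lp_norm p v"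
  using Lp_norm_infinity_bound(2)[OF assms] by (cases "p = \<infinity>") (auto simp: Lp_norm_def)

lemma Lp_norm_cong_AE:
  fixes f g :: "real \<Rightarrow> complex"
  assumes f: "f \<in> borel_measurable (lebesgue_on {0..1})" and g: "g \<in> borel_measurable (lebesgue_on {0..1})"
    and fg: "AE x in lebesgue_on {0..1}. f x = g x"
  shows "Lp_norm p f = Lp_norm p g"
proof (cases "p = \<infinity>")
  case True
  have "esssup (lebesgue_on {0..1}) (\<lambda>x. ereal (cmod (f x))) = esssup (lebesgue_on {0..1}) (\<lambda>x. ereal (cmod (g x)))"
    by (rule esssup_AE_cong) (use f g fg in \<open>auto elim: AE_mp\<close>)
  then show ?thesis using True by (simp add: Lp_norm_def)
next
  case False
  obtain N where N: "negligible N" "\<And>x. x \<in> {0..1} \<Longrightarrow> x \<notin> N \<Longrightarrow> f x = g x"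
    using AE_lebesgue_on_negligibleE[OF fg] by auto
  have "integral {0..1} (\<lambda>x. cmod (f x) powr real_of_ereal p) = integral {0..1} (\<lambda>x. cmod (g x) powr real_of_ereal p)"
    by (rule integral_spike[OF N(1)]) (use N(2) in auto)
  then show ?thesis using False by (simp add: Lp_norm_def)
qed

lemma Linf_01_bounded_representative:
  assumes v: "Linf_01 v"
  obtains v' where "v' \<in> borel_measurable (lebesgue_on {0..1})" "\<And>x. cmod (v' x) \<le> Lp_norm \<infinity> v"
    "AE x in lebesgue_on {0..1}. v' x = v x"
proof
  define N where "N = Lp_norm \<infinity> v"
  have vm: "v \<in> borel_measurable (lebesgue_on {0..1})" using v unfolding Linf_01_def by blast
  show "(\<lambda>x. if cmod (v x) \<le> N then v x else 0) \<in> borel_measurable (lebesgue_on {0..1})"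
    using vm by measurable
  show "cmod (if cmod (v x) \<le> N then v x else 0) \<le> Lp_norm \<infinity> v" for x
    using Lp_norm_infinity_bound(2)[OF v] unfolding N_def by auto
  show "AE x in lebesgue_on {0..1}. (if cmod (v x) \<le> N then v x else 0) = v x"
    using Lp_norm_infinity_bound(1)[OF v] unfolding N_def by eventually_elim auto
qed

section \<open>The velocity profile\<close>

lemma quadratic_bound_of_second_derivative_le:
  fixes U U1 U2 :: "real \<Rightarrow> real"
  assumes U: "\<And>x. x \<in> {0..1} \<Longrightarrow> (U has_real_derivative U1 x) (at x within {0..1})"
    and U1: "\<And>x. x \<in> {0..1} \<Longrightarrow> (U1 has_real_derivative U2 x) (at x within {0..1})"
    and U1_0: "U1 0 = 0" and U2: "\<And>x. x \<in> {0..1} \<Longrightarrow> U2 x \<le> -m" and x: "x \<in> {0..1}"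
  shows "U x \<le> U 0 - m / 2 * x\<^sup>2"
proof -
  have U1_le: "U1 t + m * t \<le> 0" if t: "t \<in> {0..1}" for t
  proof -
    have "U1 t + m * t \<le> U1 0 + m * 0"
    proof (rule has_real_derivative_nonpos_imp_le[where f = "\<lambda>s. U1 s + m * s" and f' = "\<lambda>s. U2 s + m"])
      fix s assume s: "s \<in> {0..t}"
      then have s1: "s \<in> {0..1}" using t by auto
      show "((\<lambda>t. U1 t + m * t) has_real_derivative U2 s + m) (at s within {0..t})"
        using DERIV_subset[OF U1[OF s1], of "{0..t}"] t by (auto intro!: derivative_eq_intros)
      show "U2 s + m \<le> 0" using U2[OF s1] by simp
    qed (use t in simp)
    then show ?thesis using U1_0 by simp
  qed
  have "U x + m / 2 * x\<^sup>2 \<le> U 0 + m / 2 * 0\<^sup>2"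
  proof (rule has_real_derivative_nonpos_imp_le[where f = "\<lambda>s. U s + m / 2 * s\<^sup>2" and f' = "\<lambda>s. U1 s + m * s"])
    fix s assume s: "s \<in> {0..x}"
    then have s1: "s \<in> {0..1}" using x by auto
    show "((\<lambda>t. U t + m / 2 * t\<^sup>2) has_real_derivative U1 s + m * s) (at s within {0..x})"
      using DERIV_subset[OF U[OF s1], of "{0..x}"] x
      by (auto intro!: derivative_eq_intros simp: power2_eq_square)
    show "U1 s + m * s \<le> 0" using U1_le[OF s1] .
  qed (use x in simp)
  then show ?thesis by simp
qed

lemma C3_on_01_profile_bounds:
  assumes C3: "C3_on_01 U U1 U2 U3" and sup: "(SUP x\<in>{0..1}. U2 x) < 0" and U1_0: "U1 0 = 0"
  obtains m where "m > 0" "continuous_on {0..1} U" "\<And>x. x \<in> {0..1} \<Longrightarrow> U2 x \<le> -m"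
    "\<And>x. x \<in> {0..1} \<Longrightarrow> U x \<le> U 0 - m / 2 * x\<^sup>2"
proof
  have dU: "\<And>x. x \<in> {0..1} \<Longrightarrow> (U has_real_derivative U1 x) (at x within {0..1})"
    and dU1: "\<And>x. x \<in> {0..1} \<Longrightarrow> (U1 has_real_derivative U2 x) (at x within {0..1})"
    and dU2: "\<And>x. x \<in> {0..1} \<Longrightarrow> (U2 has_real_derivative U3 x) (at x within {0..1})"
    using C3 unfolding C3_on_01_def by auto
  show "continuous_on {0..1} U"
    using dU DERIV_continuous continuous_on_eq_continuous_within by blast
  have "continuous_on {0..1} U2"
    using dU2 DERIV_continuous continuous_on_eq_continuous_within by blast
  then have bdd: "bdd_above (U2 ` {0..1})"
    by (intro bounded_imp_bdd_above compact_imp_bounded compact_continuous_image compact_Icc)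
  show "- (SUP x\<in>{0..1}. U2 x) > 0" using sup by simp
  show U2: "U2 x \<le> - (- (SUP x\<in>{0..1}. U2 x))" if "x \<in> {0..1}" for x
    using cSUP_upper[OF that bdd] by simp
  show "U x \<le> U 0 - - (SUP x\<in>{0..1}. U2 x) / 2 * x\<^sup>2" if "x \<in> {0..1}" for x
    by (rule quadratic_bound_of_second_derivative_le[OF dU dU1 U1_0 U2 that])
qed

lemma cmod_resolvent_symbol_ge:
  fixes U :: "real \<Rightarrow> real"
  assumes decay: "U x \<le> U 0 - k * x\<^sup>2" and \<nu>: "\<nu> > U 0"
  shows "(\<bar>\<mu>\<bar> + \<bar>\<nu> - U 0\<bar> + k * x\<^sup>2) / 2 \<le> cmod (of_real (U x) + \<i> * Complex \<mu> \<nu>)"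
proof -
  have "\<nu> - U x \<le> cmod (of_real (U x) + \<i> * Complex \<mu> \<nu>)"
    using abs_Re_le_cmod[of "of_real (U x) + \<i> * Complex \<mu> \<nu>"] by simp
  moreover have "\<bar>\<mu>\<bar> \<le> cmod (of_real (U x) + \<i> * Complex \<mu> \<nu>)"
    using abs_Im_le_cmod[of "of_real (U x) + \<i> * Complex \<mu> \<nu>"] by simp
  ultimately show ?thesis using decay \<nu> by simp
qed

section \<open>The energy estimate\<close>

text \<open>\<open>Complex (-d) \<mu>\<close> stands for \<open>U x + i\<lambda>\<close> with \<open>d = \<nu> - U x\<close>; the factor \<open>1 - i sgn \<mu>\<close>
  makes the coefficient of \<open>U''\<close> coercive whatever the sign of \<open>\<mu>\<close>.\<close>
lemma Re_rotation_mult_div_ge: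
  fixes d \<mu> u2 m :: real
  assumes d: "d > 0" and u2: "u2 \<le> -m" and m: "m > 0"
  shows "m / cmod (Complex (-d) \<mu>) \<le> Re (Complex 1 (- sgn \<mu>) * (of_real u2 / Complex (-d) \<mu>))"
proof -
  define r where "r = cmod (Complex (-d) \<mu>)"
  have r2: "r\<^sup>2 = d\<^sup>2 + \<mu>\<^sup>2" unfolding r_def by (simp add: cmod_power2)
  have r: "r > 0" unfolding r_def using d by (auto simp: complex_eq_iff)
  have re: "Re (Complex 1 (- sgn \<mu>) * (of_real u2 / Complex (-d) \<mu>)) = (-u2) * (d + \<bar>\<mu>\<bar>) / r\<^sup>2"
    unfolding r2 by (cases "\<mu> > 0"; cases "\<mu> < 0")
      (auto simp: Re_divide Im_divide divide_simps power2_eq_square algebra_simps)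
  have "r\<^sup>2 \<le> (d + \<bar>\<mu>\<bar>)\<^sup>2" unfolding r2 using d by (simp add: power2_eq_square algebra_simps)
  then have "r \<le> d + \<bar>\<mu>\<bar>" by (rule power2_le_imp_le) (use d in auto)
  then have "m * r \<le> (-u2) * (d + \<bar>\<mu>\<bar>)"
    using mult_mono[of m "-u2" r "d + \<bar>\<mu>\<bar>"] u2 m r by simp
  then have "m / r \<le> (-u2) * (d + \<bar>\<mu>\<bar>) / r\<^sup>2"
    using r by (simp add: field_simps power2_eq_square)
  then show ?thesis using re unfolding r_def by simp
qed

lemma Re_rotated_energy_density_le:
  fixes p p2 f W c :: complex and u2 \<beta> m :: real
  assumes eq: "W * (- p2 + of_real \<beta> * p) + of_real u2 * p = f"
    and W: "W \<noteq> 0" and c: "cmod c \<le> 2" "Re c = 1" and \<beta>: "\<beta> \<ge> 0"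
    and coercive: "m / cmod W \<le> Re (c * (of_real u2 / W))" and m: "m > 0"
  shows "m * Re (c * (- p2 * cnj p)) \<le> (cmod f)\<^sup>2 / cmod W"
proof -
  define P where "P = (cmod p)\<^sup>2"
  have P: "P \<ge> 0" unfolding P_def by simp
  have W': "cmod W > 0" using W by simp
  have pp: "p * cnj p = of_real P" unfolding P_def by (metis complex_norm_square)
  have "- p2 * cnj p = f * cnj p / W - (of_real u2 / W) * (p * cnj p) - of_real \<beta> * (p * cnj p)"
  proof -
    have "- p2 = (f - of_real u2 * p) / W - of_real \<beta> * p"
      using eq W by (simp add: field_simps)
    then have "- p2 * cnj p = ((f - of_real u2 * p) / W - of_real \<beta> * p) * cnj p"
      by (simp only:)
    then show ?thesis by (simp add: diff_divide_distrib algebra_simps)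
  qed
  then have "c * (- p2 * cnj p)
      = c * (f * cnj p / W) - (c * (of_real u2 / W)) * of_real P - c * of_real (\<beta> * P)"
    unfolding pp by (simp add: right_diff_distrib mult.assoc)
  moreover have Re_mult_of_real: "Re (z * of_real r) = Re z * r" for z r by simp
  ultimately have "Re (c * (- p2 * cnj p)) = Re (c * (f * cnj p / W)) - P * Re (c * (of_real u2 / W)) - \<beta> * P"
    using c(2) by (simp only: minus_complex.sel Re_mult_of_real) (simp add: mult.commute)
  also have "\<dots> \<le> 2 * (cmod f * cmod p) / cmod W - P * (m / cmod W)"
  proof -
    have "Re (c * (f * cnj p / W)) \<le> cmod c * (cmod f * cmod p) / cmod W"
      using complex_Re_le_cmod[of "c * (f * cnj p / W)"] by (simp add: norm_mult norm_divide)
    also have "\<dots> \<le> 2 * (cmod f * cmod p) / cmod W"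
      using c(1) by (intro divide_right_mono mult_right_mono) auto
    finally show ?thesis using mult_left_mono[OF coercive P] \<beta> P by (smt (verit) mult_nonneg_nonneg)
  qed
  also have "\<dots> \<le> ((cmod f)\<^sup>2 / m) / cmod W"
  proof -
    have "0 \<le> (m * cmod p - cmod f)\<^sup>2 / m" using m by simp
    also have "\<dots> = m * P + (cmod f)\<^sup>2 / m - 2 * (cmod f * cmod p)"
      unfolding P_def using m by (simp add: field_simps power2_eq_square)
    finally show ?thesis using W' by (simp add: field_simps)
  qed
  finally have "m * Re (c * (- p2 * cnj p)) \<le> m * (((cmod f)\<^sup>2 / m) / cmod W)"
    using m by (simp only: mult_le_cancel_left_pos)
  then show ?thesis using m by (simp only: times_divide_eq_right nonzero_mult_div_cancel_left)
qed

lemma integrable_square_div_weight: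
  fixes v :: "real \<Rightarrow> complex" and w :: "real \<Rightarrow> real"
  assumes v: "v \<in> borel_measurable (lebesgue_on {0..1})" "\<And>x. x \<in> {0..1} \<Longrightarrow> cmod (v x) \<le> B"
    and w: "continuous_on {0..1} w" "\<And>x. x \<in> {0..1} \<Longrightarrow> a \<le> w x" and a: "a > 0"
  shows "(\<lambda>x. (cmod (v x))\<^sup>2 / w x) integrable_on {0..1}"
proof -
  have wm: "w \<in> borel_measurable (lebesgue_on {0..1})"
    by (rule continuous_imp_measurable_on_sets_lebesgue[OF w(1)]) simp
  have "(\<lambda>x. (cmod (v x))\<^sup>2 / w x) absolutely_integrable_on {0..1}"
  proof (rule measurable_bounded_by_integrable_imp_absolutely_integrable[where g="\<lambda>x. B\<^sup>2 / a"])
    show "(\<lambda>x. (cmod (v x))\<^sup>2 / w x) \<in> borel_measurable (lebesgue_on {0..1})"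
      using v(1) wm by measurable
    fix x :: real assume x: "x \<in> {0..1}"
    have "(cmod (v x))\<^sup>2 \<le> B\<^sup>2" using v(2)[OF x] by (meson norm_ge_zero power_mono)
    then show "norm ((cmod (v x))\<^sup>2 / w x) \<le> B\<^sup>2 / a"
      using w(2)[OF x] a by (simp add: frac_le)
  qed auto
  then show ?thesis using set_lebesgue_integral_eq_integral(1) by blast
qed

lemma A_eq_derivative_energy_le:
  fixes U U2 :: "real \<Rightarrow> real" and v phi phi1 phi2 :: "real \<Rightarrow> complex"
  assumes dom: "dom_A phi phi1 phi2" and eq: "A_eq U U2 (Complex \<mu> \<nu>) alpha phi phi2 v"
    and v: "v \<in> borel_measurable (lebesgue_on {0..1})" "\<And>x. x \<in> {0..1} \<Longrightarrow> cmod (v x) \<le> B"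
    and U: "continuous_on {0..1} U" and m: "m > 0" and U2: "\<And>x. x \<in> {0..1} \<Longrightarrow> U2 x \<le> -m"
    and a: "a > 0" "\<And>x. x \<in> {0..1} \<Longrightarrow> a \<le> \<nu> - U x"
  shows "m * integral {0..1} (\<lambda>x. (cmod (phi1 x))\<^sup>2)
           \<le> integral {0..1} (\<lambda>x. (cmod (v x))\<^sup>2 / cmod (of_real (U x) + \<i> * Complex \<mu> \<nu>))"
proof -
  define W where "W x = of_real (U x) + \<i> * Complex \<mu> \<nu>" for x
  have W: "W x = Complex (- (\<nu> - U x)) \<mu>" for x unfolding W_def by (simp add: complex_eq_iff)
  have Wa: "a \<le> cmod (W x)" if "x \<in> {0..1}" for x
    using a(2)[OF that] abs_Re_le_cmod[of "W x"] unfolding W by simp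
  define c where "c = Complex 1 (- sgn \<mu>)"
  have "\<bar>Re c\<bar> + \<bar>Im c\<bar> \<le> 2" by (simp add: c_def abs_sgn_eq)
  then have c: "Re c = 1" "cmod c \<le> 2"
    using cmod_le[of c] by (simp_all only: c_def complex.sel)
  define L where "L x = Re (c * (- phi2 x * cnj (phi x)))" for x
  define b where "b x = (cmod (v x))\<^sup>2 / cmod (W x)" for x
  obtain N where N: "negligible N" and Neq: "\<And>x. x \<in> {0..1} \<Longrightarrow> x \<notin> N \<Longrightarrow>
      W x * (- phi2 x + of_real (alpha\<^sup>2) * phi x) + of_real (U2 x) * phi x = v x"
    using AE_lebesgue_on_negligibleE[OF eq[unfolded A_eq_def]] unfolding W_def by auto
  have Lb: "m * L x \<le> b x" if "x \<in> {0..1}" "x \<notin> N" for x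
    unfolding L_def b_def
  proof (rule Re_rotated_energy_density_le[OF Neq[OF that] _ c(2,1) zero_le_power2 _ m])
    show "W x \<noteq> 0" using Wa[OF that(1)] a(1) by auto
    show "m / cmod (W x) \<le> Re (c * (of_real (U2 x) / W x))"
      unfolding W c_def using Re_rotation_mult_div_ge[of "\<nu> - U x" "U2 x" m \<mu>] a(1) a(2)[OF that(1)] U2[OF that(1)] m by simp
  qed
  have L: "(L has_integral integral {0..1} (\<lambda>x. (cmod (phi1 x))\<^sup>2)) {0..1}"
    unfolding L_def by (rule dom_A_has_integral_Re_rotated[OF dom c(1)])
  have bi: "b integrable_on {0..1}"
  proof (unfold b_def, rule integrable_square_div_weight[OF v _ Wa a(1)])
    show "continuous_on {0..1} (\<lambda>x. cmod (W x))"
      unfolding W_def by (intro continuous_intros U)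
  qed
  define L' where "L' x = (if x \<in> N then b x else m * L x)" for x
  have L': "(L' has_integral m * integral {0..1} (\<lambda>x. (cmod (phi1 x))\<^sup>2)) {0..1}"
    by (rule has_integral_spike[OF N _ has_integral_mult_right[OF L]]) (simp add: L'_def)
  have "integral {0..1} L' \<le> integral {0..1} b"
    by (rule integral_le[OF has_integral_integrable[OF L'] bi]) (use Lb in \<open>simp add: L'_def\<close>)
  then have "m * integral {0..1} (\<lambda>x. (cmod (phi1 x))\<^sup>2) \<le> integral {0..1} b"
    using integral_unique[OF L'] by simp
  then show ?thesis unfolding b_def W_def .
qed

section \<open>Weighted integrals\<close>

lemma integral_inverse_quadratic_le:
  fixes \<delta> k :: real
  assumes d: "\<delta> > 0" and k: "k > 0"
  shows "integral {0..1} (\<lambda>x. 1 / (\<delta> + k * x\<^sup>2)) \<le> pi / (2 * sqrt (k * \<delta>))"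
proof -
  define q where "q = sqrt (k / \<delta>)"
  have F: "((\<lambda>x. arctan (q * x) / sqrt (k * \<delta>)) has_real_derivative 1 / (\<delta> + k * x\<^sup>2)) (at x within {0..1})" for x
  proof -
    have "((\<lambda>x. arctan (q * x)) has_real_derivative (inverse (1 + (q * x)\<^sup>2) * q)) (at x within {0..1})"
      by (auto intro!: derivative_eq_intros)
    then have "((\<lambda>x. arctan (q * x) / sqrt (k * \<delta>)) has_real_derivative (inverse (1 + (q * x)\<^sup>2) * q) / sqrt (k * \<delta>)) (at x within {0..1})"
      by (rule DERIV_cdivide)
    moreover have "(inverse (1 + (q * x)\<^sup>2) * q) / sqrt (k * \<delta>) = 1 / (\<delta> + k * x\<^sup>2)"
    proof -
      have q2: "q\<^sup>2 = k / \<delta>" unfolding q_def using d k by simp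
      have sq: "q / sqrt (k * \<delta>) = 1 / \<delta>" unfolding q_def using d k
        by (simp add: real_sqrt_divide real_sqrt_mult field_simps)
      have "(inverse (1 + (q * x)\<^sup>2) * q) / sqrt (k * \<delta>) = inverse (1 + q\<^sup>2 * x\<^sup>2) * (1 / \<delta>)"
        by (simp only: times_divide_eq_right[symmetric] sq power_mult_distrib)
      also have "\<dots> = 1 / (\<delta> + k * x\<^sup>2)" unfolding q2 using d by (simp add: field_simps)
      finally show ?thesis .
    qed
    ultimately show ?thesis by simp
  qed
  have "((\<lambda>x. 1 / (\<delta> + k * x\<^sup>2)) has_integral (arctan (q * 1) / sqrt (k * \<delta>) - arctan (q * 0) / sqrt (k * \<delta>))) {0..1}"
    by (rule fundamental_theorem_of_calculus) (use F in \<open>auto simp: has_real_derivative_iff_has_vector_derivative\<close>)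
  then have "integral {0..1} (\<lambda>x. 1 / (\<delta> + k * x\<^sup>2)) = arctan q / sqrt (k * \<delta>)"
    by (simp add: integral_unique)
  also have "\<dots> \<le> (pi / 2) / sqrt (k * \<delta>)"
    using arctan_ubound[of q] d k by (intro divide_right_mono) auto
  finally show ?thesis by simp
qed

lemma integral_quadratic_powr_le:
  fixes \<delta> k s :: real
  assumes d: "\<delta> > 0" and k: "k > 0" and s: "s \<ge> 1"
  shows "integral {0..1} (\<lambda>x. (\<delta> + k * x\<^sup>2) powr (- s)) \<le> \<delta> powr (1/2 - s) * (pi / (2 * sqrt k))"
proof -
  have pos: "\<delta> + k * x\<^sup>2 > 0" for x using d k by (simp add: add_pos_nonneg)
  have nz: "\<delta> + k * x\<^sup>2 \<noteq> 0" for x using pos[of x] by simp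
  have "integral {0..1} (\<lambda>x. (\<delta> + k * x\<^sup>2) powr (- s)) \<le> integral {0..1} (\<lambda>x. \<delta> powr (1 - s) * (1 / (\<delta> + k * x\<^sup>2)))"
  proof (rule integral_le)
    show "(\<lambda>x. (\<delta> + k * x\<^sup>2) powr (- s)) integrable_on {0..1}"
      using nz by (auto intro!: integrable_continuous_interval continuous_intros)
    show "(\<lambda>x. \<delta> powr (1 - s) * (1 / (\<delta> + k * x\<^sup>2))) integrable_on {0..1}"
      using nz by (auto intro!: integrable_continuous_interval continuous_intros)
    fix x :: real assume "x \<in> {0..1}"
    have "(\<delta> + k * x\<^sup>2) powr (- s) = (\<delta> + k * x\<^sup>2) powr (1 - s) * (\<delta> + k * x\<^sup>2) powr (-1)"
    proof -
      have "(1 - s) + (-1) = - s" by simp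
      then show ?thesis by (metis powr_add)
    qed
    also have "(\<delta> + k * x\<^sup>2) powr (1 - s) \<le> \<delta> powr (1 - s)"
      using s d k by (intro powr_mono2') auto
    then have "(\<delta> + k * x\<^sup>2) powr (1 - s) * (\<delta> + k * x\<^sup>2) powr (-1) \<le> \<delta> powr (1 - s) * (\<delta> + k * x\<^sup>2) powr (-1)"
      by (rule mult_right_mono) simp
    also have "(\<delta> + k * x\<^sup>2) powr (-1) = 1 / (\<delta> + k * x\<^sup>2)" using pos[of x] by (simp add: powr_minus_divide)
    finally show "(\<delta> + k * x\<^sup>2) powr (- s) \<le> \<delta> powr (1 - s) * (1 / (\<delta> + k * x\<^sup>2))" .
  qed
  also have "\<dots> = \<delta> powr (1 - s) * integral {0..1} (\<lambda>x. 1 / (\<delta> + k * x\<^sup>2))" by (rule integral_mult_right)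
  also have "\<dots> \<le> \<delta> powr (1 - s) * (pi / (2 * sqrt (k * \<delta>)))"
    by (rule mult_left_mono[OF integral_inverse_quadratic_le[OF d k]]) simp
  also have "\<dots> = \<delta> powr (1/2 - s) * (pi / (2 * sqrt k))"
  proof -
    have "\<delta> powr (1 - s) = \<delta> powr (1/2 - s) * sqrt \<delta>"
      using d by (simp add: powr_add[symmetric] powr_half_sqrt[symmetric])
    then show ?thesis using d k by (simp add: real_sqrt_mult field_simps)
  qed
  finally show ?thesis .
qed

lemma integral_weight_powr_le:
  fixes w :: "real \<Rightarrow> real"
  assumes w: "continuous_on {0..1} w" "\<And>x. x \<in> {0..1} \<Longrightarrow> (\<delta> + k * x\<^sup>2) / 2 \<le> w x"
    and d: "\<delta> > 0" and k: "k > 0" and s: "s \<ge> 1"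
  shows "integral {0..1} (\<lambda>x. w x powr (- s)) \<le> 2 powr s * (pi / (2 * sqrt k)) * \<delta> powr (1/2 - s)"
proof -
  have pos: "\<delta> + k * x\<^sup>2 > 0" for x using d k by (simp add: add_pos_nonneg)
  have wpos: "w x > 0" if "x \<in> {0..1}" for x using w(2)[OF that] pos[of x] by (smt (verit) half_gt_zero)
  have "integral {0..1} (\<lambda>x. w x powr (- s)) \<le> integral {0..1} (\<lambda>x. 2 powr s * (\<delta> + k * x\<^sup>2) powr (- s))"
  proof (rule integral_le)
    show "(\<lambda>x. w x powr (- s)) integrable_on {0..1}"
      by (rule integrable_continuous_interval, rule continuous_on_powr[OF w(1) continuous_on_const])
        (use wpos in fastforce)
    show "(\<lambda>x. 2 powr s * (\<delta> + k * x\<^sup>2) powr (- s)) integrable_on {0..1}"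
      using pos by (auto intro!: integrable_continuous_interval continuous_intros simp: less_imp_neq[symmetric])
    fix x :: real assume x: "x \<in> {0..1}"
    have "w x powr (- s) \<le> ((\<delta> + k * x\<^sup>2) / 2) powr (- s)"
      using w(2)[OF x] pos[of x] s by (intro powr_mono2') auto
    also have "\<dots> = 2 powr s * (\<delta> + k * x\<^sup>2) powr (- s)"
      by (simp add: powr_divide powr_minus_divide)
    finally show "w x powr (- s) \<le> 2 powr s * (\<delta> + k * x\<^sup>2) powr (- s)" .
  qed
  also have "\<dots> = 2 powr s * integral {0..1} (\<lambda>x. (\<delta> + k * x\<^sup>2) powr (- s))"
    by (rule integral_mult_right)
  also have "\<dots> \<le> 2 powr s * (\<delta> powr (1/2 - s) * (pi / (2 * sqrt k)))"
    by (rule mult_left_mono[OF integral_quadratic_powr_le[OF d k s]]) simp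
  finally show ?thesis by (simp add: mult_ac)
qed

lemma integrable_cmod_powr:
  fixes v :: "real \<Rightarrow> complex"
  assumes v: "v \<in> borel_measurable (lebesgue_on {0..1})" "\<And>x. x \<in> {0..1} \<Longrightarrow> cmod (v x) \<le> B"
    and r: "r > 0"
  shows "(\<lambda>x. cmod (v x) powr r) integrable_on {0..1}"
proof -
  have "(\<lambda>x. cmod (v x) powr r) absolutely_integrable_on {0..1}"
  proof (rule measurable_bounded_by_integrable_imp_absolutely_integrable[where g = "\<lambda>x. B powr r"])
    show "(\<lambda>x. cmod (v x) powr r) \<in> borel_measurable (lebesgue_on {0..1})"
      using v(1) by measurable
    show "norm (cmod (v x) powr r) \<le> B powr r" if "x \<in> {0..1}" for x
      using v(2)[OF that] r by (simp add: powr_mono2)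
  qed auto
  then show ?thesis using set_lebesgue_integral_eq_integral(1) by blast
qed

lemma integral_square_div_weight_le_sup:
  fixes v :: "real \<Rightarrow> complex" and w :: "real \<Rightarrow> real"
  assumes v: "v \<in> borel_measurable (lebesgue_on {0..1})" "\<And>x. x \<in> {0..1} \<Longrightarrow> cmod (v x) \<le> B"
    and vN: "AE x in lebesgue_on {0..1}. cmod (v x) \<le> N"
    and w: "continuous_on {0..1} w" "\<And>x. x \<in> {0..1} \<Longrightarrow> (\<delta> + k * x\<^sup>2) / 2 \<le> w x"
    and d: "\<delta> > 0" and k: "k > 0"
  shows "integral {0..1} (\<lambda>x. (cmod (v x))\<^sup>2 / w x) \<le> 2 * (pi / (2 * sqrt k)) * N\<^sup>2 / sqrt \<delta>"
proof -
  have pos: "\<delta> + k * x\<^sup>2 > 0" for x using d k by (simp add: add_pos_nonneg)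
  have wd: "\<delta> / 2 \<le> w x" if "x \<in> {0..1}" for x
    using w(2)[OF that] k by (smt (verit) divide_right_mono mult_nonneg_nonneg zero_le_power2)
  obtain Z where Z: "negligible Z" and vZ: "\<And>x. x \<in> {0..1} \<Longrightarrow> x \<notin> Z \<Longrightarrow> cmod (v x) \<le> N"
    using AE_lebesgue_on_negligibleE[OF vN] by auto
  define g where "g x = (if x \<in> Z then 0 else (cmod (v x))\<^sup>2 / w x)" for x
  have vw: "(\<lambda>x. (cmod (v x))\<^sup>2 / w x) integrable_on {0..1}"
    by (rule integrable_square_div_weight[OF v w(1) wd half_gt_zero[OF d]])
  have "integral {0..1} (\<lambda>x. (cmod (v x))\<^sup>2 / w x) = integral {0..1} g"
    by (rule integral_spike[OF Z]) (simp add: g_def)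
  also have "\<dots> \<le> integral {0..1} (\<lambda>x. (2 * N\<^sup>2) * (1 / (\<delta> + k * x\<^sup>2)))"
  proof (rule integral_le)
    show "g integrable_on {0..1}"
      by (rule integrable_spike[OF vw Z]) (simp add: g_def)
    show "(\<lambda>x. (2 * N\<^sup>2) * (1 / (\<delta> + k * x\<^sup>2))) integrable_on {0..1}"
      using pos by (auto intro!: integrable_continuous_interval continuous_intros simp: less_imp_neq[symmetric])
    fix x :: real assume x: "x \<in> {0..1}"
    show "g x \<le> (2 * N\<^sup>2) * (1 / (\<delta> + k * x\<^sup>2))"
    proof (cases "x \<in> Z")
      case False
      have "(cmod (v x))\<^sup>2 \<le> N\<^sup>2" using vZ[OF x False] by (meson norm_ge_zero power_mono)
      then have "(cmod (v x))\<^sup>2 / w x \<le> N\<^sup>2 / ((\<delta> + k * x\<^sup>2) / 2)"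
        using w(2)[OF x] pos[of x] by (intro frac_le) auto
      then show ?thesis using False pos[of x] by (simp add: g_def field_simps)
    qed (use pos[of x] in \<open>simp add: g_def\<close>)
  qed
  also have "\<dots> = (2 * N\<^sup>2) * integral {0..1} (\<lambda>x. 1 / (\<delta> + k * x\<^sup>2))"
    by (rule integral_mult_right)
  also have "\<dots> \<le> (2 * N\<^sup>2) * (pi / (2 * sqrt (k * \<delta>)))"
    by (rule mult_left_mono[OF integral_inverse_quadratic_le[OF d k]]) simp
  also have "\<dots> = 2 * (pi / (2 * sqrt k)) * N\<^sup>2 / sqrt \<delta>"
    by (simp add: real_sqrt_mult)
  finally show ?thesis .
qed

lemma integral_square_div_weight_le_L2:
  fixes v :: "real \<Rightarrow> complex" and w :: "real \<Rightarrow> real"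
  assumes v: "v \<in> borel_measurable (lebesgue_on {0..1})" "\<And>x. x \<in> {0..1} \<Longrightarrow> cmod (v x) \<le> B"
    and w: "continuous_on {0..1} w" "\<And>x. x \<in> {0..1} \<Longrightarrow> \<delta> / 2 \<le> w x" and d: "\<delta> > 0"
  shows "integral {0..1} (\<lambda>x. (cmod (v x))\<^sup>2 / w x) \<le> 2 / \<delta> * integral {0..1} (\<lambda>x. (cmod (v x))\<^sup>2)"
proof -
  have v2: "(\<lambda>x. (cmod (v x))\<^sup>2) integrable_on {0..1}"
    using integrable_square_div_weight[OF v continuous_on_const, of 1 1] by simp
  have "integral {0..1} (\<lambda>x. (cmod (v x))\<^sup>2 / w x) \<le> integral {0..1} (\<lambda>x. 2 / \<delta> * (cmod (v x))\<^sup>2)"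
  proof (rule integral_le)
    show "(\<lambda>x. (cmod (v x))\<^sup>2 / w x) integrable_on {0..1}"
      by (rule integrable_square_div_weight[OF v w half_gt_zero[OF d]])
    show "(\<lambda>x. 2 / \<delta> * (cmod (v x))\<^sup>2) integrable_on {0..1}"
      using integrable_on_cmult_left[OF v2, of "2 / \<delta>"] by simp
    fix x :: real assume x: "x \<in> {0..1}"
    have "(cmod (v x))\<^sup>2 / w x \<le> (cmod (v x))\<^sup>2 / (\<delta> / 2)"
      using w(2)[OF x] d by (intro divide_left_mono) auto
    then show "(cmod (v x))\<^sup>2 / w x \<le> 2 / \<delta> * (cmod (v x))\<^sup>2" by (simp add: mult.commute)
  qed
  then show ?thesis by simp
qed

lemma square_div_le_Young:
  fixes y w N \<theta> r s :: real
  assumes y: "y \<ge> 0" and w: "w > 0" and N: "N > 0" and \<theta>: "\<theta> > 0"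
    and r: "r > 1" and s: "s > 1" and rs: "1 / r + 1 / s = 1"
  shows "y\<^sup>2 / w \<le> N\<^sup>2 * \<theta> / r / N powr (2 * r) * y powr (2 * r) + N\<^sup>2 * \<theta> / s * \<theta> powr (- s) * w powr (- s)"
proof -
  define A where "A = (y / N)\<^sup>2"
  define B where "B = 1 / (\<theta> * w)"
  have AB: "A \<ge> 0" "B \<ge> 0" unfolding A_def B_def using \<theta> w by auto
  have "y\<^sup>2 / w = (N\<^sup>2 * \<theta>) * (A * B)"
    unfolding A_def B_def using N \<theta> w by (simp add: field_simps power2_eq_square)
  also have "\<dots> \<le> (N\<^sup>2 * \<theta>) * (A powr r / r + B powr s / s)"
    using Youngs_inequality[OF r s rs AB] N \<theta> by (intro mult_left_mono) auto
  also have "A powr r = y powr (2 * r) / N powr (2 * r)"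
    unfolding A_def using N y by (simp add: powr_powr powr_divide flip: powr_numeral)
  also have "B powr s = \<theta> powr (- s) * w powr (- s)"
    unfolding B_def using \<theta> w by (simp add: powr_divide powr_mult powr_minus_divide)
  finally show ?thesis using r s by (simp add: field_simps)
qed

lemma integral_square_div_le_Hoelder:
  fixes v :: "real \<Rightarrow> complex" and w :: "real \<Rightarrow> real"
  assumes v: "v \<in> borel_measurable (lebesgue_on {0..1})" "\<And>x. x \<in> {0..1} \<Longrightarrow> cmod (v x) \<le> B"
    and w: "continuous_on {0..1} w" "\<And>x. x \<in> {0..1} \<Longrightarrow> a \<le> w x" and a: "a > 0"
    and p: "pr > 2" and N: "N > 0" and vN: "integral {0..1} (\<lambda>x. cmod (v x) powr pr) \<le> N powr pr"
    and \<theta>: "\<theta> > 0" and w\<theta>: "integral {0..1} (\<lambda>x. w x powr (- (pr / (pr - 2)))) \<le> \<theta> powr (pr / (pr - 2))"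
  shows "integral {0..1} (\<lambda>x. (cmod (v x))\<^sup>2 / w x) \<le> N\<^sup>2 * \<theta>"
proof -
  define s where "s = pr / (pr - 2)"
  define r where "r = pr / 2"
  have s: "s > 1" unfolding s_def using p by (simp add: field_simps)
  have r: "r > 1" unfolding r_def using p by simp
  have rs: "1 / r + 1 / s = 1" unfolding r_def s_def using p by (simp add: field_simps)
  have wpos: "w x > 0" if "x \<in> {0..1}" for x using w(2)[OF that] a by simp
  have wsi: "(\<lambda>x. w x powr (- s)) integrable_on {0..1}"
    by (rule integrable_continuous_interval, rule continuous_on_powr[OF w(1) continuous_on_const])
      (use wpos in fastforce)
  have vpi: "(\<lambda>x. cmod (v x) powr pr) integrable_on {0..1}"
    using integrable_cmod_powr[OF v, of pr] p by simp
  define c1 where "c1 = N\<^sup>2 * \<theta> / r / N powr pr"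
  define c2 where "c2 = N\<^sup>2 * \<theta> / s * \<theta> powr (- s)"
  have c: "c1 \<ge> 0" "c2 \<ge> 0" unfolding c1_def c2_def using N \<theta> r s by auto
  have "integral {0..1} (\<lambda>x. (cmod (v x))\<^sup>2 / w x)
      \<le> integral {0..1} (\<lambda>x. c1 * cmod (v x) powr pr + c2 * w x powr (- s))"
  proof (rule integral_le)
    show "(\<lambda>x. (cmod (v x))\<^sup>2 / w x) integrable_on {0..1}"
      by (rule integrable_square_div_weight[OF v w a])
    show "(\<lambda>x. c1 * cmod (v x) powr pr + c2 * w x powr (- s)) integrable_on {0..1}"
      using integrable_on_cmult_left[OF vpi, of c1] integrable_on_cmult_left[OF wsi, of c2]
      by (auto intro!: integrable_add)
    fix x :: real assume x: "x \<in> {0..1}"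
    show "(cmod (v x))\<^sup>2 / w x \<le> c1 * cmod (v x) powr pr + c2 * w x powr (- s)"
      using square_div_le_Young[OF norm_ge_zero wpos[OF x] N \<theta> r s rs]
      unfolding c1_def c2_def r_def using p by simp
  qed
  also have "\<dots> = c1 * integral {0..1} (\<lambda>x. cmod (v x) powr pr) + c2 * integral {0..1} (\<lambda>x. w x powr (- s))"
    using integrable_on_cmult_left[OF vpi, of c1] integrable_on_cmult_left[OF wsi, of c2]
    by (simp add: integral_add)
  also have "\<dots> \<le> c1 * N powr pr + c2 * \<theta> powr s"
    using vN w\<theta> c unfolding s_def by (intro add_mono mult_left_mono) auto
  also have "\<dots> = N\<^sup>2 * \<theta> * (1 / r + 1 / s)"
    unfolding c1_def c2_def using N \<theta> by (simp add: powr_minus field_simps)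
  finally show ?thesis using rs by simp
qed

lemma integral_square_div_weight_le_of_integral_powr_le:
  fixes v :: "real \<Rightarrow> complex" and w :: "real \<Rightarrow> real"
  assumes v: "v \<in> borel_measurable (lebesgue_on {0..1})" "\<And>x. x \<in> {0..1} \<Longrightarrow> cmod (v x) \<le> B"
    and w: "continuous_on {0..1} w" "\<And>x. x \<in> {0..1} \<Longrightarrow> (\<delta> + k * x\<^sup>2) / 2 \<le> w x"
    and d: "\<delta> > 0" and k: "k > 0" and p: "pr > 2"
    and N: "N > 0" and vN: "integral {0..1} (\<lambda>x. cmod (v x) powr pr) \<le> N powr pr"
  shows "integral {0..1} (\<lambda>x. (cmod (v x))\<^sup>2 / w x)
           \<le> 2 * (pi / (2 * sqrt k)) powr (1 - 2 / pr) * \<delta> powr (- 1/2 - 1 / pr) * N\<^sup>2"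
proof -
  define s where "s = pr / (pr - 2)"
  define c where "c = pi / (2 * sqrt k)"
  define \<theta> where "\<theta> = (2 powr s * c * \<delta> powr (1/2 - s)) powr (1 / s)"
  have s: "s > 1" unfolding s_def using p by (simp add: field_simps)
  have c: "c > 0" unfolding c_def using k by simp
  have wd: "\<delta> / 2 \<le> w x" if "x \<in> {0..1}" for x
    using w(2)[OF that] k by (smt (verit) divide_right_mono mult_nonneg_nonneg zero_le_power2)
  have "integral {0..1} (\<lambda>x. w x powr (- s)) \<le> 2 powr s * c * \<delta> powr (1/2 - s)"
    using integral_weight_powr_le[OF w d k less_imp_le[OF s]] unfolding c_def .
  also have "\<dots> = \<theta> powr s"
    unfolding \<theta>_def using c d s by (simp add: powr_powr)
  finally have "integral {0..1} (\<lambda>x. w x powr (- s)) \<le> \<theta> powr s" .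
  then have "integral {0..1} (\<lambda>x. (cmod (v x))\<^sup>2 / w x) \<le> N\<^sup>2 * \<theta>"
    using c d unfolding s_def
    by (intro integral_square_div_le_Hoelder[OF v w(1) wd half_gt_zero[OF d] p N vN]) (simp_all add: \<theta>_def)
  also have "\<theta> = 2 * c powr (1 - 2 / pr) * \<delta> powr (- 1/2 - 1 / pr)"
  proof -
    have "1 / s = 1 - 2 / pr" "s * (1 - 2 / pr) = 1" "(1/2 - s) * (1 / s) = - 1/2 - 1 / pr"
      unfolding s_def using p by (simp_all add: field_simps)
    then show ?thesis unfolding \<theta>_def using c s d by (simp add: powr_mult powr_powr)
  qed
  finally show ?thesis unfolding c_def by (simp add: mult_ac)
qed

lemma integral_square_div_weight_le_Lp:
  fixes v :: "real \<Rightarrow> complex" and w :: "real \<Rightarrow> real"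
  assumes v: "v \<in> borel_measurable (lebesgue_on {0..1})" "\<And>x. x \<in> {0..1} \<Longrightarrow> cmod (v x) \<le> B"
    and w: "continuous_on {0..1} w" "\<And>x. x \<in> {0..1} \<Longrightarrow> (\<delta> + k * x\<^sup>2) / 2 \<le> w x"
    and d: "\<delta> > 0" and k: "k > 0" and p: "pr > 2"
  shows "integral {0..1} (\<lambda>x. (cmod (v x))\<^sup>2 / w x)
           \<le> 2 * (pi / (2 * sqrt k)) powr (1 - 2 / pr) * \<delta> powr (- 1/2 - 1 / pr)
              * (integral {0..1} (\<lambda>x. cmod (v x) powr pr) powr (1 / pr))\<^sup>2"
proof (rule le_of_le_right_limit[where f = "\<lambda>N. 2 * (pi / (2 * sqrt k)) powr (1 - 2 / pr) * \<delta> powr (- 1/2 - 1 / pr) * N\<^sup>2"])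
  define I where "I = integral {0..1} (\<lambda>x. cmod (v x) powr pr)"
  have I: "I \<ge> 0"
    unfolding I_def using integrable_cmod_powr[OF v, of pr] p by (intro integral_nonneg) auto
  show "continuous (at_right (I powr (1 / pr)))
          (\<lambda>N. 2 * (pi / (2 * sqrt k)) powr (1 - 2 / pr) * \<delta> powr (- 1/2 - 1 / pr) * N\<^sup>2)"
    by (intro continuous_intros)
  fix N assume N: "N > integral {0..1} (\<lambda>x. cmod (v x) powr pr) powr (1 / pr)"
  then have lt: "I powr (1 / pr) < N" unfolding I_def[symmetric] .
  then have "N > 0" using powr_ge_zero[of I "1 / pr"] by linarith
  have "I = (I powr (1 / pr)) powr pr" using I p by (simp add: powr_powr)
  also have "\<dots> \<le> N powr pr" using lt p by (intro powr_mono2) auto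
  finally have "I \<le> N powr pr" .
  then show "integral {0..1} (\<lambda>x. (cmod (v x))\<^sup>2 / w x)
      \<le> 2 * (pi / (2 * sqrt k)) powr (1 - 2 / pr) * \<delta> powr (- 1/2 - 1 / pr) * N\<^sup>2"
    using integral_square_div_weight_le_of_integral_powr_le[OF v w d k p \<open>N > 0\<close>] unfolding I_def by simp
qed

lemma square_div_powr: "(y / x powr e)\<^sup>2 = y\<^sup>2 * x powr (- 2 * e)" for x y e :: real
proof -
  have "(x powr e)\<^sup>2 = x powr (2 * e)" by (simp only: power2_eq_square mult_2 powr_add)
  then show ?thesis by (simp add: power_divide powr_minus divide_inverse power_mult_distrib power_inverse)
qed

text \<open>The exponent of \<open>pi / (2 * sqrt k)\<close> is \<open>1/q\<close>, where \<open>q\<close> is the Hoelder exponent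
  conjugate to \<open>p/2\<close> (so \<open>q = \<infinity>\<close> for \<open>p = 2\<close>).\<close>
definition weight_constant :: "ereal \<Rightarrow> real \<Rightarrow> real" where
  "weight_constant p k = 2 * (pi / (2 * sqrt k)) powr (if p = \<infinity> then 1 else 1 - 2 / real_of_ereal p)"

definition resolvent_exponent :: "ereal \<Rightarrow> real" where
  "resolvent_exponent p = (if p = \<infinity> then 0 else 1 / (2 * real_of_ereal p)) + 1/4"

lemma integral_square_div_weight_le_Lp_norm:
  fixes v :: "real \<Rightarrow> complex" and w :: "real \<Rightarrow> real" and p :: ereal
  assumes p: "2 \<le> p" and v: "v \<in> borel_measurable (lebesgue_on {0..1})" "\<And>x. x \<in> {0..1} \<Longrightarrow> cmod (v x) \<le> B"
    and w: "continuous_on {0..1} w" "\<And>x. x \<in> {0..1} \<Longrightarrow> (\<delta> + k * x\<^sup>2) / 2 \<le> w x"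
    and d: "\<delta> > 0" and k: "k > 0"
  shows "integral {0..1} (\<lambda>x. (cmod (v x))\<^sup>2 / w x)
           \<le> weight_constant p k * (Lp_norm p v / \<delta> powr resolvent_exponent p)\<^sup>2"
proof -
  consider "p = \<infinity>" | "p = 2" | pr where "p = ereal pr" "pr > 2"
    using p by (cases p) (auto simp: le_less)
  then show ?thesis
  proof cases
    case 1
    have "AE x in lebesgue_on {0..1}. cmod (v x) \<le> B"
      using v(2) by (intro AE_I2) simp
    then have "Linf_01 v" unfolding Linf_01_def using v(1) by blast
    from integral_square_div_weight_le_sup[OF v Lp_norm_infinity_bound(1)[OF this] w d k]
    moreover have "weight_constant p k = 2 * (pi / (2 * sqrt k))"
      using 1 k by (simp add: weight_constant_def)
    moreover have "\<delta> powr (- 2 * resolvent_exponent p) = 1 / sqrt \<delta>"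
      using 1 d by (simp add: resolvent_exponent_def powr_minus_divide powr_half_sqrt)
    ultimately show ?thesis using 1 by (simp add: square_div_powr)
  next
    case 2
    have wd: "\<delta> / 2 \<le> w x" if "x \<in> {0..1}" for x
      using w(2)[OF that] k by (smt (verit) divide_right_mono mult_nonneg_nonneg zero_le_power2)
    define I where "I = integral {0..1} (\<lambda>x. (cmod (v x))\<^sup>2)"
    have "I \<ge> 0" unfolding I_def
      using integrable_square_div_weight[OF v continuous_on_const, of 1 1] by (intro integral_nonneg) auto
    then have "(Lp_norm p v)\<^sup>2 = I"
      using 2 by (simp add: Lp_norm_def I_def powr_half_sqrt)
    moreover have "weight_constant p k = 2" using 2 k by (simp add: weight_constant_def)
    moreover have "\<delta> powr (- 2 * resolvent_exponent p) = 1 / \<delta>"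
      using 2 d by (simp add: resolvent_exponent_def powr_minus_divide)
    ultimately show ?thesis
      using integral_square_div_weight_le_L2[OF v w(1) wd d] by (simp add: square_div_powr I_def)
  next
    case 3
    have "- 2 * resolvent_exponent p = - 1/2 - 1 / pr"
      using 3 by (simp add: resolvent_exponent_def field_simps)
    then show ?thesis
      using integral_square_div_weight_le_Lp[OF v w d k 3(2)] 3
      by (simp add: weight_constant_def Lp_norm_def square_div_powr mult_ac)
  qed
qed

section \<open>The resolvent estimate\<close>

lemma A_eq_H1_norm_le:
  fixes U U2 :: "real \<Rightarrow> real" and p :: ereal
  assumes p: "2 \<le> p" and U: "continuous_on {0..1} U" and m: "m > 0"
    and U2: "\<And>x. x \<in> {0..1} \<Longrightarrow> U2 x \<le> -m"
    and decay: "\<And>x. x \<in> {0..1} \<Longrightarrow> U x \<le> U 0 - m / 2 * x\<^sup>2" and \<nu>: "\<nu> > U 0"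
    and dom: "dom_A phi phi1 phi2" and v: "Linf_01 v" and eq: "A_eq U U2 (Complex \<mu> \<nu>) alpha phi phi2 v"
  shows "H1_norm phi phi1 \<le> sqrt (2 / m * weight_constant p (m / 2))
           / (\<bar>\<mu>\<bar> + \<bar>\<nu> - U 0\<bar>) powr resolvent_exponent p * Lp_norm p v"
proof -
  define \<delta> where "\<delta> = \<bar>\<mu>\<bar> + \<bar>\<nu> - U 0\<bar>"
  have d: "\<delta> > 0" unfolding \<delta>_def using \<nu> by simp
  define w where "w x = cmod (of_real (U x) + \<i> * Complex \<mu> \<nu>)" for x
  have w: "continuous_on {0..1} w" unfolding w_def by (intro continuous_intros U)
  have w_ge: "(\<delta> + m / 2 * x\<^sup>2) / 2 \<le> w x" if "x \<in> {0..1}" for x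
    unfolding \<delta>_def w_def using decay[OF that] \<nu> by (intro cmod_resolvent_symbol_ge) simp_all
  obtain v' where v'm: "v' \<in> borel_measurable (lebesgue_on {0..1})"
    and v'b: "\<And>x. cmod (v' x) \<le> Lp_norm \<infinity> v" and v'v: "AE x in lebesgue_on {0..1}. v' x = v x"
    using Linf_01_bounded_representative[OF v] by blast
  have "Lp_norm p v' = Lp_norm p v"
    using v v'm v'v unfolding Linf_01_def by (intro Lp_norm_cong_AE) auto
  then have weighted: "integral {0..1} (\<lambda>x. (cmod (v' x))\<^sup>2 / w x)
      \<le> weight_constant p (m / 2) * (Lp_norm p v / \<delta> powr resolvent_exponent p)\<^sup>2"
    using integral_square_div_weight_le_Lp_norm[OF p v'm v'b w w_ge d] m by simp
  have "A_eq U U2 (Complex \<mu> \<nu>) alpha phi phi2 v'"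
    using eq v'v unfolding A_eq_def by eventually_elim simp
  moreover have a: "\<nu> - U 0 \<le> \<nu> - U x" if "x \<in> {0..1}" for x
    using decay[OF that] m by (smt (verit) divide_pos_pos mult_nonneg_nonneg zero_le_power2)
  ultimately have energy: "m * integral {0..1} (\<lambda>x. (cmod (phi1 x))\<^sup>2) \<le> integral {0..1} (\<lambda>x. (cmod (v' x))\<^sup>2 / w x)"
    unfolding w_def using \<nu> by (intro A_eq_derivative_energy_le[OF dom _ v'm v'b U m U2 _ a]) auto
  have "integral {0..1} (\<lambda>x. (cmod (phi x))\<^sup>2 + (cmod (phi1 x))\<^sup>2)
      \<le> 2 * integral {0..1} (\<lambda>x. (cmod (phi1 x))\<^sup>2)"
    by (rule dom_A_H1_le_derivative[OF dom])
  also have "\<dots> \<le> 2 / m * integral {0..1} (\<lambda>x. (cmod (v' x))\<^sup>2 / w x)"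
    using energy m by (simp add: field_simps)
  also have "\<dots> \<le> 2 / m * (weight_constant p (m / 2) * (Lp_norm p v / \<delta> powr resolvent_exponent p)\<^sup>2)"
    using weighted m by (intro mult_left_mono) auto
  finally have "H1_norm phi phi1
      \<le> sqrt (2 / m * (weight_constant p (m / 2) * (Lp_norm p v / \<delta> powr resolvent_exponent p)\<^sup>2))"
    unfolding H1_norm_def by (rule real_sqrt_le_mono)
  also have "\<dots> = sqrt (2 / m * weight_constant p (m / 2)) * \<bar>Lp_norm p v / \<delta> powr resolvent_exponent p\<bar>"
    by (simp only: mult.assoc[symmetric] real_sqrt_mult real_sqrt_abs)
  finally show ?thesis
    using Lp_norm_nonneg[OF v] d unfolding \<delta>_def by simp
qed

theorem mainTheorem9:
  fixes p :: ereal and U U1 U2 U3 :: "real \<Rightarrow> real"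
  assumes "2 \<le> p"
    and "C3_on_01 U U1 U2 U3"
    and "U 1 = 0"
    and "(SUP x\<in>{0..1}. U2 x) < 0"
    and "U1 0 = 0"
    and "U1 1 = -1"
  shows "\<exists>\<mu>0>0. \<exists>C>0. \<forall>\<mu> \<nu> :: real. \<nu> > U 0 \<longrightarrow> \<bar>\<mu>\<bar> < \<mu>0 \<longrightarrow>
           (\<forall>alpha \<ge> 0. \<forall>phi phi1 phi2 v.
              dom_A phi phi1 phi2 \<and> Linf_01 v \<and> A_eq U U2 (Complex \<mu> \<nu>) alpha phi phi2 v \<longrightarrow>
              H1_norm phi phi1 \<le>
                C / ((\<bar>\<mu>\<bar> + \<bar>\<nu> - U 0\<bar>) powr
                      ((if p = \<infinity> then 0 else 1 / (2 * real_of_ereal p)) + 1/4))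
                  * Lp_norm p v)"
proof -
  obtain m where m: "m > 0" and U: "continuous_on {0..1} U"
    and U2: "\<And>x. x \<in> {0..1} \<Longrightarrow> U2 x \<le> -m" and decay: "\<And>x. x \<in> {0..1} \<Longrightarrow> U x \<le> U 0 - m / 2 * x\<^sup>2"
    using C3_on_01_profile_bounds[OF assms(2,4,5)] by blast
  define C where "C = sqrt (2 / m * weight_constant p (m / 2))"
  have "C > 0" unfolding C_def weight_constant_def using m by simp
  moreover note A_eq_H1_norm_le[OF assms(1) U m U2 decay]
  ultimately show ?thesis
    unfolding C_def[symmetric] resolvent_exponent_def by (intro exI[of _ 1] exI[of _ C]) auto
qed

end
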